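(* Fix $n$, generators $x_{i_1},\dots,x_{i_k}\in\mathcal{B}_n$, an index $j$, integers $a_h$ ($h\ne j$), and set $V(e)=V_n(x_{i_1}^{a_1}\cdots x_{i_j}^{e}\cdots x_{i_k}^{a_k})$ for $e\in\mathbb{Z}$. Then the sequence $(V(e))_{e\in\mathbb{Z}}$ contains at most two terms equal to $1$, and if $V(a)=V(b)=1$ with $a\ne b$, then $|a-b|\in\{1,2\}$.
   Context: $\mathcal{B}_n$ is the Artin braid group with generators $x_1,\dots,x_{n-1}$; $V_n(\beta)$ is the Jones polynomial of the closure of $\beta$, normalized by $V(\text{unknot})=1$ and $q^{-1}V_{L_+}-qV_{L_-}=(q^{1/2}-q^{-1/2})V_{L_0}$, as a Laurent polynomial in $s=q^{-1/2}$. Conventions: closures of $\alpha x_i^{e+2}\gamma$, $\alpha x_i^{e+1}\gamma$, $\alpha x_i^{e}\gamma$ play the roles of $L_-,L_0,L_+$ (e.g. the closure of $x_1^2\in\mathcal B_2$ has Jones polynomial $-s-s^5$). *)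

theory Defs
  imports "HOL-Computational_Algebra.Formal_Laurent_Series"
begin

text \<open>A braid word in B_n: a list of letters (i, p); (i, True) is the generator x_i,
  (i, False) its inverse x_i^(-1), where 1 \<le> i \<le> n - 1.\<close>
type_synonym letter = "nat \<times> bool"

definition braid_word :: "(nat \<Rightarrow> nat) \<Rightarrow> (nat \<Rightarrow> int) \<Rightarrow> nat \<Rightarrow> letter list" where
  "braid_word idx a k = concat (map (\<lambda>h. replicate (nat \<bar>a h\<bar>) (idx h, a h \<ge> 0)) [1..<Suc k])"

text \<open>Crossing sign. By the paper's convention (closure of x_1^2 has V = -s - s^5, a
  negative Hopf link in the variable t = q), x_i is a negative crossing.\<close>
definition crossing_sign :: "letter \<Rightarrow> int" where
  "crossing_sign l = (if snd l then -1 else 1)"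

definition writhe :: "letter list \<Rightarrow> int" where
  "writhe w = sum_list (map crossing_sign w)"

text \<open>Vertices of the closed braid diagram after smoothing: (level, strand).\<close>
definition diagram_vertices :: "nat \<Rightarrow> letter list \<Rightarrow> (nat \<times> nat) set" where
  "diagram_vertices n w = {0..length w} \<times> {1..n}"

text \<open>Arcs of the state obtained by smoothing the letters in S horizontally (cup-cap, U_i)
  and the other letters vertically (identity); the last family of arcs is the closure.\<close>
definition smoothing_edges :: "nat \<Rightarrow> letter list \<Rightarrow> nat set \<Rightarrow> ((nat \<times> nat) \<times> (nat \<times> nat)) set" where
  "smoothing_edges n w S =
     {((l, j), (Suc l, j)) | l j. l < length w \<and> 1 \<le> j \<and> j \<le> n \<and>
                                 \<not> (l \<in> S \<and> (j = fst (w ! l) \<or> j = Suc (fst (w ! l))))}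
   \<union> {((l, fst (w ! l)), (l, Suc (fst (w ! l)))) | l. l \<in> S \<and> l < length w}
   \<union> {((Suc l, fst (w ! l)), (Suc l, Suc (fst (w ! l)))) | l. l \<in> S \<and> l < length w}
   \<union> {((length w, j), (0, j)) | j. 1 \<le> j \<and> j \<le> n}"

definition state_loops :: "nat \<Rightarrow> letter list \<Rightarrow> nat set \<Rightarrow> nat" where
  "state_loops n w S =
     card (diagram_vertices n w //
           Restr ((smoothing_edges n w S \<union> (smoothing_edges n w S)\<inverse>)\<^sup>*) (diagram_vertices n w))"

text \<open>Number of A-smoothings: a crossing is A-smoothed when it is smoothed vertically and has
  sign +1, or horizontally and has sign -1 (Kauffman: positive crossing = A id + A^-1 U).\<close>
definition A_count :: "letter list \<Rightarrow> nat set \<Rightarrow> nat" where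
  "A_count w S = card {l. l < length w \<and> ((l \<notin> S) = (crossing_sign (w ! l) = 1))}"

definition B_count :: "letter list \<Rightarrow> nat set \<Rightarrow> nat" where
  "B_count w S = length w - A_count w S"

text \<open>Jones polynomial of the closure of w in B_n, via the Kauffman bracket:
  V = (-A^3)^(-writhe) \<Sum>_S A^(a-b) (-A^2-A^-2)^(loops-1), A = t^(-1/4),
  written as a Laurent polynomial in s = A^2 = q^(-1/2) (all exponents are even).\<close>
definition jones :: "nat \<Rightarrow> letter list \<Rightarrow> int fls" where
  "jones n w = (\<Sum>S\<in>Pow {..<length w}.
      fls_const ((-1) ^ nat \<bar>writhe w\<bar>)
      * fls_X_intpow ((int (A_count w S) - int (B_count w S) - 3 * writhe w) div 2)
      * (- (fls_X + fls_X_inv)) ^ (state_loops n w S - 1))"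

end

theory Submission
  imports Defs
begin

text \<open>
  Write the braid as L x_i^e R. In the Kauffman state sum of its closure, a crossing of the
  block x_i^e that is smoothed vertically can simply be deleted, and among the horizontally
  smoothed ones every one beyond the first adds a loop. Summing out the block with
  1 + s^(\<plusminus>1) delta = -s^(\<plusminus>2), where delta = -(s + s^(-1)) is the loop value, gives
  delta V(e) = (-1)^e s^e P + s^(3e) Q with Laurent polynomials P, Q independent of e.

  If V(a) = V(b) = 1 and d = b - a, eliminating P leaves
  s^(3a) Q (s^(3d) - (-1)^d s^d) = delta (1 - (-1)^d s^d). For d \<ge> 3 the coefficients of any
  Laurent series solving this obey a recurrence that keeps producing coefficients \<plusminus>1, so
  there is no Laurent polynomial solution; and the equations for d = 1 and d = 2 have different
  solutions. Hence the exponents with V(e) = 1 lie at distance 1 or 2 and there are at most two.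
\<close>

section \<open>Connected components\<close>

definition component_rel :: "('v \<times> 'v) set \<Rightarrow> 'v set \<Rightarrow> ('v \<times> 'v) set" where
  "component_rel E V = Restr ((E \<union> E\<inverse>)\<^sup>*) V"

lemma component_rel_refl: "x \<in> V \<Longrightarrow> (x, x) \<in> component_rel E V"
  by (simp add: component_rel_def)

lemma component_rel_sym: "(x, y) \<in> component_rel E V \<Longrightarrow> (y, x) \<in> component_rel E V"
proof -
  assume "(x, y) \<in> component_rel E V"
  then have "(y, x) \<in> ((E \<union> E\<inverse>)\<inverse>)\<^sup>*" "x \<in> V" "y \<in> V"
    by (auto simp: component_rel_def rtrancl_converse)
  moreover have "(E \<union> E\<inverse>)\<inverse> = E \<union> E\<inverse>" by auto
  ultimately show ?thesis by (simp add: component_rel_def)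
qed

lemma component_rel_trans:
  "(x, y) \<in> component_rel E V \<Longrightarrow> (y, z) \<in> component_rel E V \<Longrightarrow> (x, z) \<in> component_rel E V"
  by (auto simp: component_rel_def)

lemma component_rel_edge:
  "(x, y) \<in> E \<or> (y, x) \<in> E \<Longrightarrow> x \<in> V \<Longrightarrow> y \<in> V \<Longrightarrow> (x, y) \<in> component_rel E V"
  by (auto simp: component_rel_def)

lemma component_rel_in: "(x, y) \<in> component_rel E V \<Longrightarrow> x \<in> V \<and> y \<in> V"
  by (auto simp: component_rel_def)

lemma equiv_component_rel: "equiv V (component_rel E V)"
proof (rule equivI)
  show "refl_on V (component_rel E V)" by (rule refl_onI) (auto simp: component_rel_def)
  show "sym (component_rel E V)" by (rule symI) (rule component_rel_sym)
  show "trans (component_rel E V)" by (rule transI) (rule component_rel_trans)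
  show "component_rel E V \<subseteq> V \<times> V" by (auto simp: component_rel_def)
qed

lemma component_rel_induct [consumes 1, case_names base step]:
  assumes "(x, y) \<in> component_rel E V" and "P x"
    and "\<And>u v. P u \<Longrightarrow> (u, v) \<in> E \<or> (v, u) \<in> E \<Longrightarrow> P v"
  shows "P y"
proof -
  from assms(1) have "(x, y) \<in> (E \<union> E\<inverse>)\<^sup>*" by (simp add: component_rel_def)
  then show ?thesis
  proof (induction rule: rtrancl_induct)
    case base
    show ?case by (rule assms(2))
  next
    case (step y z)
    then show ?case using assms(3)[of y z] by blast
  qed
qed

locale graph_contraction =
  fixes V :: "'v set" and E :: "('v \<times> 'v) set" and C :: "'v set"
    and f :: "'v \<Rightarrow> 'w" and V' :: "'w set" and E' :: "('w \<times> 'w) set"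
  assumes finite_V: "finite V"
    and edges_in_V: "E \<subseteq> V \<times> V"
    and C_closed: "\<And>x y. (x, y) \<in> E \<Longrightarrow> x \<in> C \<longleftrightarrow> y \<in> C"
    and C_in_V: "C \<subseteq> V"
    and C_connected: "\<And>u v. u \<in> C \<Longrightarrow> v \<in> C \<Longrightarrow> (u, v) \<in> component_rel E V"
    and image_V: "f ` (V - C) = V'"
    and edge_image: "\<And>u v. (u, v) \<in> E \<Longrightarrow> u \<notin> C \<Longrightarrow> v \<notin> C \<Longrightarrow>
        (f u, f v) \<in> component_rel E' V'"
    and edge_lift: "\<And>u' v'. (u', v') \<in> E' \<Longrightarrow>
        \<exists>u v. u \<in> V - C \<and> v \<in> V - C \<and> f u = u' \<and> f v = v' \<and> (u, v) \<in> component_rel E V"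
    and fibre_connected: "\<And>u v. u \<in> V - C \<Longrightarrow> v \<in> V - C \<Longrightarrow> f u = f v \<Longrightarrow>
        (u, v) \<in> component_rel E V"
begin

abbreviation "R \<equiv> component_rel E V"
abbreviation "R' \<equiv> component_rel E' V'"

lemma in_C_iff: "(x, y) \<in> R \<Longrightarrow> x \<in> C \<longleftrightarrow> y \<in> C"
proof (induction rule: component_rel_induct)
  case (step u v)
  then show ?case using C_closed[of u v] C_closed[of v u] by blast
qed simp

lemma image_related: "(u, v) \<in> R \<Longrightarrow> u \<notin> C \<Longrightarrow> (f u, f v) \<in> R'"
proof -
  assume uv: "(u, v) \<in> R" and u: "u \<notin> C"
  have "u \<in> V - C" using component_rel_in[OF uv] u by blast
  then have "f u \<in> V'" using image_V by blast
  have "v \<notin> C \<and> (f u, f v) \<in> R'" using uv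
  proof (induction rule: component_rel_induct)
    case base
    show ?case using u component_rel_refl[OF \<open>f u \<in> V'\<close>] by blast
  next
    case (step y z)
    have y: "y \<notin> C" using step.IH by simp
    have "z \<notin> C" using step.hyps y C_closed[of y z] C_closed[of z y] by blast
    have "(f y, f z) \<in> R'"
      using step.hyps
    proof
      assume "(y, z) \<in> E"
      then show ?thesis using edge_image y \<open>z \<notin> C\<close> by blast
    next
      assume "(z, y) \<in> E"
      then show ?thesis using edge_image y \<open>z \<notin> C\<close> component_rel_sym[of "f z" "f y"] by blast
    qed
    with step.IH \<open>z \<notin> C\<close> show ?case using component_rel_trans[of "f u" "f y" E' V' "f z"] by blast
  qed
  then show ?thesis by blast
qed

lemma related_if_image_related:
  assumes "(f u, f v) \<in> R'" "u \<in> V - C" "v \<in> V - C"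
  shows "(u, v) \<in> R"
proof -
  have "\<forall>x \<in> V - C. f x = f v \<longrightarrow> (u, x) \<in> R" using assms(1)
  proof (induction rule: component_rel_induct)
    case base
    show ?case
    proof (intro ballI impI)
      fix x assume "x \<in> V - C" "f x = f u"
      then show "(u, x) \<in> R" using fibre_connected[OF assms(2), of x] by simp
    qed
  next
    case (step y' z')
    have "\<exists>a b. a \<in> V - C \<and> b \<in> V - C \<and> f a = y' \<and> f b = z' \<and> (a, b) \<in> R"
      using step.hyps
    proof
      assume "(y', z') \<in> E'"
      then show ?thesis by (rule edge_lift)
    next
      assume "(z', y') \<in> E'"
      then obtain a b where "a \<in> V - C" "b \<in> V - C" "f a = z'" "f b = y'" "(a, b) \<in> R"
        using edge_lift by blast
      then show ?thesis using component_rel_sym[of a b] by blast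
    qed
    then obtain a b where ab: "a \<in> V - C" "b \<in> V - C" "f a = y'" "f b = z'" "(a, b) \<in> R"
      by blast
    have "(u, a) \<in> R" using step.IH ab(1,3) by blast
    then have "(u, b) \<in> R" using ab(5) by (rule component_rel_trans)
    show ?case
    proof (intro ballI impI)
      fix x assume "x \<in> V - C" "f x = z'"
      then have "(b, x) \<in> R" using fibre_connected[OF ab(2)] ab(4) by simp
      with \<open>(u, b) \<in> R\<close> show "(u, x) \<in> R" by (rule component_rel_trans)
    qed
  qed
  then show ?thesis using assms(3) by blast
qed

lemma image_class:
  assumes x: "x \<in> V - C"
  shows "f ` (R `` {x}) = R' `` {f x}"
proof (intro equalityI subsetI)
  fix y' assume "y' \<in> f ` (R `` {x})"
  then obtain y where "(x, y) \<in> R" "y' = f y" by blast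
  then show "y' \<in> R' `` {f x}" using image_related[of x y] x by simp
next
  fix y' assume "y' \<in> R' `` {f x}"
  then have xy': "(f x, y') \<in> R'" by simp
  then have "y' \<in> f ` (V - C)" using component_rel_in[OF xy'] image_V by simp
  then obtain y where y: "y \<in> V - C" "y' = f y" by blast
  then have "(x, y) \<in> R" using related_if_image_related[OF _ x y(1)] xy' by simp
  then show "y' \<in> f ` (R `` {x})" using y(2) by blast
qed

lemma bij_betw_quotients: "bij_betw ((`) f) ((V - C) // R) (V' // R')"
proof (rule bij_betw_imageI)
  show "inj_on ((`) f) ((V - C) // R)"
  proof (rule inj_onI)
    fix X Y assume "X \<in> (V - C) // R" "Y \<in> (V - C) // R" and eq: "f ` X = f ` Y"
    then obtain x y where x: "x \<in> V - C" "X = R `` {x}" and y: "y \<in> V - C" "Y = R `` {y}"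
      by (auto elim!: quotientE)
    have "f y \<in> V'" using y image_V by blast
    then have "f y \<in> R' `` {f y}" using component_rel_refl by simp
    then have "f y \<in> R' `` {f x}"
      using eq image_class[OF x(1)] image_class[OF y(1)] x(2) y(2) by simp
    then have "(f x, f y) \<in> R'" by simp
    then have "(x, y) \<in> R" using related_if_image_related x(1) y(1) by blast
    then show "X = Y" unfolding x(2) y(2) by (rule equiv_class_eq[OF equiv_component_rel])
  qed
  show "(`) f ` ((V - C) // R) = V' // R'"
  proof (intro equalityI subsetI)
    fix Y assume "Y \<in> (`) f ` ((V - C) // R)"
    then obtain x where x: "x \<in> V - C" "Y = f ` (R `` {x})" by (auto elim!: quotientE)
    have "f x \<in> V'" using x(1) image_V by blast
    then show "Y \<in> V' // R'" unfolding x(2) image_class[OF x(1)] by (rule quotientI)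
  next
    fix Y assume "Y \<in> V' // R'"
    then obtain y' where "y' \<in> V'" "Y = R' `` {y'}" by (auto elim!: quotientE)
    then obtain y where y: "y \<in> V - C" "Y = R' `` {f y}" using image_V by blast
    then have "Y = f ` (R `` {y})" using image_class by simp
    moreover have "R `` {y} \<in> (V - C) // R" using y(1) by (rule quotientI)
    ultimately show "Y \<in> (`) f ` ((V - C) // R)" by (rule image_eqI)
  qed
qed

lemma quotient_split: "C \<noteq> {} \<Longrightarrow> V // R = insert C ((V - C) // R)"
proof -
  assume "C \<noteq> {}"
  then obtain c where c: "c \<in> C" by blast
  have class_C: "R `` {x} = C" if "x \<in> C" for x
    using C_connected[OF that] in_C_iff[of x] that by blast
  have "V // R = (\<Union>x\<in>C \<union> (V - C). {R `` {x}})"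
    using C_in_V by (simp add: quotient_def Un_absorb1)
  also have "\<dots> = insert C ((V - C) // R)"
    using c class_C by (auto simp: quotient_def)
  finally show ?thesis .
qed

lemma card_components:
  "card (V // R) = card (V' // R') + (if C = {} then 0 else 1)"
proof -
  have "card ((V - C) // R) = card (V' // R')" by (rule bij_betw_same_card[OF bij_betw_quotients])
  moreover have "C \<notin> (V - C) // R"
  proof
    assume "C \<in> (V - C) // R"
    then obtain x where "x \<in> V - C" "C = R `` {x}" by (auto elim!: quotientE)
    then show False using component_rel_refl[of x V E] by blast
  qed
  moreover have "finite ((V - C) // R)" using finite_V by (simp add: quotient_def)
  ultimately show ?thesis
  proof (cases "C = {}")
    case False
    with \<open>C \<notin> (V - C) // R\<close> \<open>finite ((V - C) // R)\<close> have "card (V // R) = Suc (card ((V - C) // R))"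
      unfolding quotient_split[OF False] by simp
    with False \<open>card ((V - C) // R) = card (V' // R')\<close> show ?thesis by simp
  qed simp
qed

end

section \<open>States of closed braid diagrams\<close>

lemma state_loops_eq_card_components:
  "state_loops n w S =
     card (diagram_vertices n w // component_rel (smoothing_edges n w S) (diagram_vertices n w))"
  by (simp add: state_loops_def component_rel_def)

definition valid_word :: "nat \<Rightarrow> letter list \<Rightarrow> bool" where
  "valid_word n w \<longleftrightarrow> (\<forall>x\<in>set w. 1 \<le> fst x \<and> fst x < n)"

lemma valid_word_nth: "valid_word n w \<Longrightarrow> l < length w \<Longrightarrow> 1 \<le> fst (w ! l) \<and> fst (w ! l) < n"
  by (simp add: valid_word_def)

lemma smoothing_edges_cases [consumes 1, case_names vertical bottom top closure]:
  assumes "(u, v) \<in> smoothing_edges n w S"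
  obtains (vertical) l j where "u = (l, j)" "v = (Suc l, j)" "l < length w" "1 \<le> j" "j \<le> n"
      "\<not> (l \<in> S \<and> (j = fst (w ! l) \<or> j = Suc (fst (w ! l))))"
    | (bottom) l where "u = (l, fst (w ! l))" "v = (l, Suc (fst (w ! l)))" "l \<in> S" "l < length w"
    | (top) l where "u = (Suc l, fst (w ! l))" "v = (Suc l, Suc (fst (w ! l)))" "l \<in> S" "l < length w"
    | (closure) j where "u = (length w, j)" "v = (0, j)" "1 \<le> j" "j \<le> n"
  using assms unfolding smoothing_edges_def by blast

lemma smoothing_edges_vertical:
  "l < length w \<Longrightarrow> 1 \<le> j \<Longrightarrow> j \<le> n \<Longrightarrow>
    \<not> (l \<in> S \<and> (j = fst (w ! l) \<or> j = Suc (fst (w ! l)))) \<Longrightarrow>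
    ((l, j), (Suc l, j)) \<in> smoothing_edges n w S"
  unfolding smoothing_edges_def by blast

lemma smoothing_edges_bottom:
  "l \<in> S \<Longrightarrow> l < length w \<Longrightarrow> ((l, fst (w ! l)), (l, Suc (fst (w ! l)))) \<in> smoothing_edges n w S"
  unfolding smoothing_edges_def by blast

lemma smoothing_edges_top:
  "l \<in> S \<Longrightarrow> l < length w \<Longrightarrow>
    ((Suc l, fst (w ! l)), (Suc l, Suc (fst (w ! l)))) \<in> smoothing_edges n w S"
  unfolding smoothing_edges_def by blast

lemma smoothing_edges_closure:
  "1 \<le> j \<Longrightarrow> j \<le> n \<Longrightarrow> ((length w, j), (0, j)) \<in> smoothing_edges n w S"
  unfolding smoothing_edges_def by blast

lemma smoothing_edges_subset:
  assumes "valid_word n w"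
  shows "smoothing_edges n w S \<subseteq> diagram_vertices n w \<times> diagram_vertices n w"
proof (intro subrelI)
  fix u v assume "(u, v) \<in> smoothing_edges n w S"
  then show "(u, v) \<in> diagram_vertices n w \<times> diagram_vertices n w"
    by (cases rule: smoothing_edges_cases)
      (use assms in \<open>auto simp: diagram_vertices_def dest: valid_word_nth\<close>)
qed

lemma component_rel_smoothing_edge:
  "valid_word n w \<Longrightarrow> (u, v) \<in> smoothing_edges n w S \<Longrightarrow>
    (u, v) \<in> component_rel (smoothing_edges n w S) (diagram_vertices n w)"
  using smoothing_edges_subset by (blast intro: component_rel_edge)

lemma smoothing_edges_cong_fst:
  assumes "length w = length w'" "\<forall>l<length w. fst (w!l) = fst (w'!l)"
  shows "smoothing_edges n w S = smoothing_edges n w' S"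
  using assms unfolding smoothing_edges_def by (auto; metis)

lemma state_loops_cong_fst:
  assumes "length w = length w'" "\<forall>l<length w. fst (w!l) = fst (w'!l)"
  shows "state_loops n w S = state_loops n w' S"
  using smoothing_edges_cong_fst[OF assms] assms(1) by (simp add: state_loops_def diagram_vertices_def)

lemma state_loops_pos:
  assumes "1 \<le> n"
  shows "1 \<le> state_loops n w S"
proof -
  let ?V = "diagram_vertices n w" and ?R = "component_rel (smoothing_edges n w S) (diagram_vertices n w)"
  have "(0,1) \<in> ?V" using assms by (simp add: diagram_vertices_def)
  then have "?R``{(0,1)} \<in> ?V // ?R" by (rule quotientI)
  moreover have "finite (?V // ?R)"
    by (rule finite_quotient) (auto simp: diagram_vertices_def component_rel_def)
  ultimately have "card (?V // ?R) \<noteq> 0" by auto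
  then show ?thesis by (simp add: state_loops_eq_card_components)
qed

section \<open>Deleting a crossing\<close>

definition del_letter :: "nat \<Rightarrow> 'a list \<Rightarrow> 'a list" where
  "del_letter q w = take q w @ drop (Suc q) w"

definition del_index :: "nat \<Rightarrow> nat set \<Rightarrow> nat set" where
  "del_index q S = {l. (l < q \<and> l \<in> S) \<or> (q \<le> l \<and> Suc l \<in> S)}"

definition collapse_level :: "nat \<Rightarrow> nat \<times> nat \<Rightarrow> nat \<times> nat" where
  "collapse_level q = (\<lambda>(l, j). (if l \<le> q then l else l - 1, j))"

lemma collapse_level_simp [simp]: "collapse_level q (l, j) = (if l \<le> q then l else l - 1, j)"
  by (simp add: collapse_level_def)

lemma del_index_iff [simp]: "l \<in> del_index q S \<longleftrightarrow> (if l < q then l \<in> S else Suc l \<in> S)"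
  by (auto simp: del_index_def)

lemma length_del_letter [simp]: "q < length w \<Longrightarrow> length (del_letter q w) = length w - 1"
  by (simp add: del_letter_def)

lemma nth_del_letter:
  "q < length w \<Longrightarrow> l < length w - 1 \<Longrightarrow> del_letter q w ! l = w ! (if l < q then l else Suc l)"
  by (auto simp: del_letter_def nth_append min_def)

lemma shift_letter_index:
  assumes "q < length w" "l < length w" "l \<noteq> q" and l': "l' = (if l < q then l else l - 1)"
  shows "l' < length w - 1" "del_letter q w ! l' = w ! l" "l' \<in> del_index q S \<longleftrightarrow> l \<in> S"
    "collapse_level q (l, j) = (l', j)" "collapse_level q (Suc l, j) = (Suc l', j)"
  using assms by (auto simp: nth_del_letter)

lemma collapse_level_vertices:
  assumes "q < length w" and "C \<subseteq> {Suc q} \<times> UNIV"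
  shows "collapse_level q ` (diagram_vertices n w - C) = diagram_vertices n (del_letter q w)"
proof (intro equalityI subsetI)
  fix x assume "x \<in> collapse_level q ` (diagram_vertices n w - C)"
  then show "x \<in> diagram_vertices n (del_letter q w)"
    using assms(1) by (auto simp: diagram_vertices_def)
next
  fix x assume x: "x \<in> diagram_vertices n (del_letter q w)"
  obtain l j where lj: "x = (l, j)" by (cases x)
  show "x \<in> collapse_level q ` (diagram_vertices n w - C)"
  proof (cases "l \<le> q")
    case True
    then have "collapse_level q (l, j) = x" "(l, j) \<in> diagram_vertices n w - C"
      using x assms lj by (auto simp: diagram_vertices_def)
    then show ?thesis by (metis image_eqI)
  next
    case False
    then have "collapse_level q (Suc l, j) = x" "(Suc l, j) \<in> diagram_vertices n w - C"
      using x assms lj by (auto simp: diagram_vertices_def)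
    then show ?thesis by (metis image_eqI)
  qed
qed

text \<open>The last two hypotheses exclude the arcs of crossing q; every other arc survives, shifted,
  when q is deleted.\<close>

lemma collapse_level_smoothing_edge:
  assumes q: "q < length w" and uv: "(u, v) \<in> smoothing_edges n w S"
    and not_strand: "\<not> (fst u = q \<and> fst v = Suc q)"
    and not_cup_cap: "q \<in> S \<Longrightarrow>
      (u, v) \<noteq> ((q, fst (w ! q)), (q, Suc (fst (w ! q)))) \<and>
      (u, v) \<noteq> ((Suc q, fst (w ! q)), (Suc q, Suc (fst (w ! q))))"
  shows "(collapse_level q u, collapse_level q v) \<in> smoothing_edges n (del_letter q w) (del_index q S)"
  using uv
proof (cases rule: smoothing_edges_cases)
  case (vertical l j)
  then have "l \<noteq> q" using not_strand by auto
  note sl = shift_letter_index[OF q vertical(3) this refl]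
  show ?thesis unfolding vertical sl(4,5)
    by (rule smoothing_edges_vertical) (use vertical sl q in simp_all)
next
  case (bottom l)
  then have "l \<noteq> q" using not_cup_cap by auto
  note sl = shift_letter_index[OF q bottom(4) this refl]
  show ?thesis unfolding bottom sl(4) sl(2)[symmetric]
    by (rule smoothing_edges_bottom) (use bottom sl q in simp_all)
next
  case (top l)
  then have "l \<noteq> q" using not_cup_cap by auto
  note sl = shift_letter_index[OF q top(4) this refl]
  show ?thesis unfolding top sl(5) sl(2)[symmetric]
    by (rule smoothing_edges_top) (use top sl q in simp_all)
next
  case (closure j)
  then show ?thesis using q smoothing_edges_closure[of j n "del_letter q w"] by simp
qed

lemma smoothing_edge_lift:
  assumes q: "q < length w"
    and uv': "(u', v') \<in> smoothing_edges n (del_letter q w) (del_index q S)"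
  obtains u v where "(u, v) \<in> smoothing_edges n w S" "collapse_level q u = u'" "collapse_level q v = v'"
proof -
  let ?W = "del_letter q w"
  have l: "l < length w" "l \<noteq> q" "l' = (if l < q then l else l - 1)"
    if "l' < length ?W" "l = (if l' < q then l' else Suc l')" for l l'
    using that q by auto
  from uv' show ?thesis
  proof (cases rule: smoothing_edges_cases)
    case (vertical l' j)
    define l where "l = (if l' < q then l' else Suc l')"
    note ll = l[OF vertical(3) l_def]
    note sl = shift_letter_index[OF q ll]
    have "((l, j), (Suc l, j)) \<in> smoothing_edges n w S"
      by (rule smoothing_edges_vertical) (use vertical sl ll in simp_all)
    then show ?thesis using that vertical(1,2) sl(4,5) by metis
  next
    case (bottom l')
    define l where "l = (if l' < q then l' else Suc l')"
    note ll = l[OF bottom(4) l_def]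
    note sl = shift_letter_index[OF q ll]
    have "((l, fst (w ! l)), (l, Suc (fst (w ! l)))) \<in> smoothing_edges n w S"
      by (rule smoothing_edges_bottom) (use bottom sl ll in simp_all)
    then show ?thesis using that bottom(1,2) sl(2,4) by metis
  next
    case (top l')
    define l where "l = (if l' < q then l' else Suc l')"
    note ll = l[OF top(4) l_def]
    note sl = shift_letter_index[OF q ll]
    have "((Suc l, fst (w ! l)), (Suc l, Suc (fst (w ! l)))) \<in> smoothing_edges n w S"
      by (rule smoothing_edges_top) (use top sl ll in simp_all)
    then show ?thesis using that top(1,2) sl(2,5) by metis
  next
    case (closure j)
    have "((length w, j), (0, j)) \<in> smoothing_edges n w S"
      by (rule smoothing_edges_closure) (use closure in simp_all)
    moreover have "collapse_level q (length w, j) = u'" "collapse_level q (0, j) = v'"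
      using closure q by auto
    ultimately show ?thesis by (rule that)
  qed
qed

lemma collapse_level_strand_edge:
  assumes "(u, v) \<in> smoothing_edges n w S" "fst u = q" "fst v = Suc q"
  shows "collapse_level q u = collapse_level q v"
  using assms(1)
proof (cases rule: smoothing_edges_cases)
  case (vertical l j)
  then show ?thesis using assms(2,3) by simp
qed (use assms(2,3) in auto)

lemma component_rel_collapse_fibre:
  assumes q: "q < length w"
    and u: "u \<in> diagram_vertices n w" and v: "v \<in> diagram_vertices n w"
    and eq: "collapse_level q u = collapse_level q v"
    and strand: "\<And>j. (Suc q, j) \<in> {u, v} \<Longrightarrow> q \<in> S \<Longrightarrow>
      j \<noteq> fst (w ! q) \<and> j \<noteq> Suc (fst (w ! q))"
  shows "(u, v) \<in> component_rel (smoothing_edges n w S) (diagram_vertices n w)"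
proof -
  obtain a j b j' where uv: "u = (a, j)" "v = (b, j')" by (cases u, cases v)
  from eq uv have "j' = j" by (simp split: if_splits)
  from eq uv have "a = b \<or> (a = q \<and> b = Suc q) \<or> (b = q \<and> a = Suc q)" by (auto split: if_splits)
  moreover have "((q, j), (Suc q, j)) \<in> smoothing_edges n w S" if "a = q \<and> b = Suc q \<or> b = q \<and> a = Suc q"
    using that u uv \<open>j' = j\<close> strand[of j]
    by (intro smoothing_edges_vertical) (auto simp: q diagram_vertices_def)
  ultimately show ?thesis
    using u v uv \<open>j' = j\<close> by (auto intro: component_rel_refl component_rel_edge)
qed

lemma state_loops_del_vertical:
  assumes w: "valid_word n w" and q: "q < length w" and qS: "q \<notin> S"
  shows "state_loops n w S = state_loops n (del_letter q w) (del_index q S)"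
proof -
  let ?V = "diagram_vertices n w" and ?E = "smoothing_edges n w S"
  let ?V' = "diagram_vertices n (del_letter q w)" and ?E' = "smoothing_edges n (del_letter q w) (del_index q S)"
  interpret graph_contraction ?V ?E "{}" "collapse_level q" ?V' ?E'
  proof
    show "finite ?V" by (simp add: diagram_vertices_def)
    show "?E \<subseteq> ?V \<times> ?V" using w by (rule smoothing_edges_subset)
    show "collapse_level q ` (?V - {}) = ?V'" using collapse_level_vertices[OF q, of "{}"] by simp
  next
    fix u v assume uv: "(u, v) \<in> ?E"
    then have "collapse_level q u \<in> ?V'" "collapse_level q v \<in> ?V'"
      using smoothing_edges_subset[OF w] collapse_level_vertices[OF q, of "{}" n] by blast+
    moreover have "collapse_level q u = collapse_level q v \<or> (collapse_level q u, collapse_level q v) \<in> ?E'"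
      using collapse_level_smoothing_edge[OF q uv] collapse_level_strand_edge[OF uv] qS by blast
    ultimately show "(collapse_level q u, collapse_level q v) \<in> component_rel ?E' ?V'"
      by (auto intro: component_rel_refl component_rel_edge)
  next
    fix u' v' assume "(u', v') \<in> ?E'"
    then obtain u v where uv: "(u, v) \<in> ?E" "collapse_level q u = u'" "collapse_level q v = v'"
      using smoothing_edge_lift[OF q] by metis
    then show "\<exists>u v. u \<in> ?V - {} \<and> v \<in> ?V - {} \<and> collapse_level q u = u' \<and> collapse_level q v = v' \<and>
        (u, v) \<in> component_rel ?E ?V"
      using smoothing_edges_subset[OF w] component_rel_smoothing_edge[OF w] by blast
  next
    fix u v assume "u \<in> ?V - {}" "v \<in> ?V - {}" "collapse_level q u = collapse_level q v"
    then show "(u, v) \<in> component_rel ?E ?V" by (intro component_rel_collapse_fibre[OF q]) (use qS in auto)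
  qed auto
  show ?thesis using card_components by (simp add: state_loops_eq_card_components)
qed

text \<open>Two adjacent crossings on the same strands, both smoothed horizontally: the cap of the first
  and the cup of the second bound a small loop, and deleting the first crossing removes exactly
  this loop.\<close>

locale cup_cap_pair =
  fixes n :: nat and w :: "letter list" and S :: "nat set" and q :: nat
  assumes valid: "valid_word n w" and q: "Suc q < length w"
    and horizontal: "q \<in> S" "Suc q \<in> S" and same: "fst (w ! Suc q) = fst (w ! q)"
begin

abbreviation "gen \<equiv> fst (w ! q)"
abbreviation "loop \<equiv> {(Suc q, gen), (Suc q, Suc gen)}"
abbreviation "V \<equiv> diagram_vertices n w"
abbreviation "E \<equiv> smoothing_edges n w S"
abbreviation "V' \<equiv> diagram_vertices n (del_letter q w)"
abbreviation "E' \<equiv> smoothing_edges n (del_letter q w) (del_index q S)"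

lemma q_less: "q < length w"
  using q by simp

lemma gen_range: "1 \<le> gen" "gen < n"
  using valid_word_nth[OF valid q_less] by simp_all

lemma loop_subset: "loop \<subseteq> V"
  using gen_range q by (auto simp: diagram_vertices_def)

lemma cup_vertices: "{(q, gen), (q, Suc gen)} \<subseteq> V - loop"
  using gen_range q by (auto simp: diagram_vertices_def)

lemma loop_closed:
  assumes "(x, y) \<in> E"
  shows "x \<in> loop \<longleftrightarrow> y \<in> loop"
  using assms
proof (cases rule: smoothing_edges_cases)
  case (vertical l j)
  then show ?thesis using horizontal same by auto
qed (use same q in auto)

lemma cup_connected:
  assumes "a \<in> {(q, gen), (q, Suc gen)}" "b \<in> {(q, gen), (q, Suc gen)}"
  shows "(a, b) \<in> component_rel E V"
  using assms cup_vertices smoothing_edges_bottom[OF horizontal(1) q_less, of n]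
  by (auto intro: component_rel_refl component_rel_edge)

lemma edge_image:
  assumes uv: "(u, v) \<in> E" and "u \<notin> loop" "v \<notin> loop"
  shows "(collapse_level q u, collapse_level q v) \<in> component_rel E' V'"
proof -
  have V': "collapse_level q u \<in> V'" "collapse_level q v \<in> V'"
    using assms smoothing_edges_subset[OF valid] collapse_level_vertices[OF q_less, of loop n]
    by auto
  have "((q, gen), (q, Suc gen)) \<in> E'"
    using smoothing_edges_bottom[of q "del_index q S" "del_letter q w" n] horizontal(2) q same
    by (simp add: nth_del_letter)
  moreover have "(u, v) \<noteq> ((Suc q, gen), (Suc q, Suc gen))" using \<open>u \<notin> loop\<close> by simp
  ultimately have "collapse_level q u = collapse_level q v \<or> (collapse_level q u, collapse_level q v) \<in> E'"
    using collapse_level_smoothing_edge[OF q_less uv] collapse_level_strand_edge[OF uv]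
    by (cases "(u, v) = ((q, gen), (q, Suc gen))") auto
  then show ?thesis using V' by (auto intro: component_rel_refl component_rel_edge)
qed

lemma edge_lift:
  assumes "(u', v') \<in> E'"
  shows "\<exists>u v. u \<in> V - loop \<and> v \<in> V - loop \<and> collapse_level q u = u' \<and> collapse_level q v = v' \<and>
    (u, v) \<in> component_rel E V"
proof -
  obtain u v where uv: "(u, v) \<in> E" "collapse_level q u = u'" "collapse_level q v = v'"
    using smoothing_edge_lift[OF q_less assms] by metis
  show ?thesis
  proof (cases "u \<in> loop")
    case False
    then have "v \<notin> loop" using loop_closed[OF uv(1)] by simp
    then show ?thesis
      using False uv smoothing_edges_subset[OF valid] component_rel_smoothing_edge[OF valid] by blast
  next
    case True
    then have "v \<in> loop" using loop_closed[OF uv(1)] by simp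
    then have cup_ends: "u' \<in> {(q, gen), (q, Suc gen)}" "v' \<in> {(q, gen), (q, Suc gen)}"
      using True uv(2,3) by auto
    then have "u' \<in> V - loop" "v' \<in> V - loop" using cup_vertices by blast+
    moreover have "collapse_level q u' = u'" "collapse_level q v' = v'" using cup_ends by auto
    moreover have "(u', v') \<in> component_rel E V" using cup_connected[OF cup_ends] .
    ultimately show ?thesis by (intro exI[of _ u'] exI[of _ v'] conjI)
  qed
qed

lemma state_loops_eq: "state_loops n w S = state_loops n (del_letter q w) (del_index q S) + 1"
proof -
  interpret graph_contraction V E loop "collapse_level q" V' E'
  proof
    show "finite V" by (simp add: diagram_vertices_def)
    show "E \<subseteq> V \<times> V" using valid by (rule smoothing_edges_subset)
    show "collapse_level q ` (V - loop) = V'" by (rule collapse_level_vertices[OF q_less]) auto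
    show "loop \<subseteq> V" by (rule loop_subset)
  next
    fix u v assume "u \<in> loop" "v \<in> loop"
    then show "(u, v) \<in> component_rel E V"
      using smoothing_edges_top[OF horizontal(1) q_less, of n] loop_subset
      by (auto intro: component_rel_refl component_rel_edge)
  next
    fix u v assume "u \<in> V - loop" "v \<in> V - loop" "collapse_level q u = collapse_level q v"
    then show "(u, v) \<in> component_rel E V" by (intro component_rel_collapse_fibre[OF q_less]) auto
  next
    fix x y assume "(x, y) \<in> E"
    then show "x \<in> loop \<longleftrightarrow> y \<in> loop" by (rule loop_closed)
  next
    fix u v assume "(u, v) \<in> E" "u \<notin> loop" "v \<notin> loop"
    then show "(collapse_level q u, collapse_level q v) \<in> component_rel E' V'" by (rule edge_image)
  next
    fix u' v' assume "(u', v') \<in> E'"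
    then show "\<exists>u v. u \<in> V - loop \<and> v \<in> V - loop \<and> collapse_level q u = u' \<and>
        collapse_level q v = v' \<and> (u, v) \<in> component_rel E V"
      by (rule edge_lift)
  qed
  show ?thesis using card_components by (simp add: state_loops_eq_card_components)
qed

end

lemmas state_loops_del_cup_cap_pair = cup_cap_pair.state_loops_eq[OF cup_cap_pair.intro]

section \<open>States of a block of equal crossings\<close>

lemma del_letter_replicate:
  assumes "length L = p" "p \<le> q" "q < p + Suc m"
  shows "del_letter q (L @ replicate (Suc m) c @ R) = L @ replicate m c @ R"
proof (rule nth_equalityI)
  show "length (del_letter q (L @ replicate (Suc m) c @ R)) = length (L @ replicate m c @ R)"
    using assms by simp
next
  fix l assume "l < length (del_letter q (L @ replicate (Suc m) c @ R))"
  then have l: "l < p + m + length R" using assms by simp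
  show "del_letter q (L @ replicate (Suc m) c @ R) ! l = (L @ replicate m c @ R) ! l"
    using assms l by (auto simp: nth_del_letter nth_append nth_Cons')
qed

lemma image_del_index:
  assumes "q \<notin> T"
  shows "(\<lambda>l. if l < q then l else Suc l) ` del_index q T = T"
proof (intro equalityI subsetI)
  fix x assume "x \<in> T"
  show "x \<in> (\<lambda>l. if l < q then l else Suc l) ` del_index q T"
  proof (cases "x < q")
    case True
    then show ?thesis using \<open>x \<in> T\<close> by (intro image_eqI[of _ _ x]) simp_all
  next
    case False
    then have "x = Suc (x - 1)" "\<not> x - 1 < q" using assms \<open>x \<in> T\<close> by (cases "x = q"; simp)+
    then show ?thesis using \<open>x \<in> T\<close> by (intro image_eqI[of _ _ "x - 1"]) simp_all
  qed
qed (auto split: if_splits)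

lemma card_del_index: "q \<notin> T \<Longrightarrow> card (del_index q T) = card T"
  using card_image[of "\<lambda>l. if l < q then l else Suc l" "del_index q T"] image_del_index[of q T]
  by (auto simp: inj_on_def split: if_splits)

text \<open>A state of L @ R, transported to L @ c^m @ R with the block of length m starting at
  position p; T then chooses the horizontally smoothed crossings of the block.\<close>

definition lift_state :: "nat \<Rightarrow> nat \<Rightarrow> nat set \<Rightarrow> nat set" where
  "lift_state p m S = {l. (l < p \<and> l \<in> S) \<or> (p + m \<le> l \<and> l - m \<in> S)}"

lemma lift_state_iff [simp]: "l \<in> lift_state p m S \<longleftrightarrow> (l < p \<and> l \<in> S) \<or> (p + m \<le> l \<and> l - m \<in> S)"
  by (simp add: lift_state_def)

lemma lift_state_0 [simp]: "lift_state p 0 S = S"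
  by auto

lemma del_index_lift_state:
  assumes "p \<le> q" "q < p + Suc m"
  shows "del_index q (lift_state p (Suc m) S \<union> T) = lift_state p m S \<union> del_index q T"
  using assms by (auto split: if_splits)

lemma del_index_subset_block:
  assumes "T \<subseteq> {p..<p + Suc m}" "p \<le> q" "q < p + Suc m"
  shows "del_index q T \<subseteq> {p..<p + m}"
proof
  fix l assume "l \<in> del_index q T"
  then show "l \<in> {p..<p + m}" using assms by (cases "l < q") auto
qed

definition lower_state :: "nat \<Rightarrow> nat \<Rightarrow> nat set \<Rightarrow> nat set" where
  "lower_state p m U = {l. (l < p \<and> l \<in> U) \<or> (p \<le> l \<and> l + m \<in> U)}"

lemma lift_lower_state: "lift_state p m (lower_state p m U) \<union> (U \<inter> {p..<p + m}) = U"
  by (auto simp: lower_state_def)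

lemma sum_Pow_split_block:
  fixes F :: "nat set \<Rightarrow> 'a::comm_monoid_add"
  shows "(\<Sum>U\<in>Pow {..<p + m + r}. F U) =
    (\<Sum>S\<in>Pow {..<p + r}. \<Sum>T\<in>Pow {p..<p + m}. F (lift_state p m S \<union> T))"
proof -
  have "(\<Sum>U\<in>Pow {..<p + m + r}. F U) =
      (\<Sum>(S, T)\<in>Pow {..<p + r} \<times> Pow {p..<p + m}. F (lift_state p m S \<union> T))"
  proof (rule sum.reindex_bij_witness[where j = "\<lambda>U. (lower_state p m U, U \<inter> {p..<p + m})"
        and i = "\<lambda>(S, T). lift_state p m S \<union> T"])
    fix U assume "U \<in> Pow {..<p + m + r}"
    then show "(case (lower_state p m U, U \<inter> {p..<p + m}) of (S, T) \<Rightarrow> lift_state p m S \<union> T) = U"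
      "(lower_state p m U, U \<inter> {p..<p + m}) \<in> Pow {..<p + r} \<times> Pow {p..<p + m}"
      by (auto simp: lower_state_def)
  next
    fix x assume "x \<in> Pow {..<p + r} \<times> Pow {p..<p + m}"
    then obtain S T where "x = (S, T)" "S \<subseteq> {..<p + r}" "T \<subseteq> {p..<p + m}" by blast
    then show "(\<lambda>U. (lower_state p m U, U \<inter> {p..<p + m})) (case x of (S, T) \<Rightarrow> lift_state p m S \<union> T) = x"
      "(case x of (S, T) \<Rightarrow> lift_state p m S \<union> T) \<in> Pow {..<p + m + r}"
      by (auto simp: lower_state_def) force+
  qed (simp add: lift_lower_state)
  then show ?thesis by (simp add: sum.cartesian_product)
qed

lemma state_loops_block_vertical:
  assumes w: "valid_word n (L @ replicate (Suc m) c @ R)" and p: "length L = p"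
    and q: "p \<le> q" "q < p + Suc m" "q \<notin> T"
  shows "state_loops n (L @ replicate (Suc m) c @ R) (lift_state p (Suc m) S \<union> T) =
    state_loops n (L @ replicate m c @ R) (lift_state p m S \<union> del_index q T)"
proof -
  have "q < length (L @ replicate (Suc m) c @ R)" "q \<notin> lift_state p (Suc m) S \<union> T"
    using p q by auto
  from state_loops_del_vertical[OF w this] show ?thesis
    using del_letter_replicate[OF p q(1,2)] del_index_lift_state[OF q(1,2)] by simp
qed

lemma state_loops_block_cup_cap:
  assumes w: "valid_word n (L @ replicate (Suc (Suc m)) c @ R)" and p: "length L = p"
  shows "state_loops n (L @ replicate (Suc (Suc m)) c @ R) (lift_state p (Suc (Suc m)) S \<union> {p..<p + Suc (Suc m)}) =
    state_loops n (L @ replicate (Suc m) c @ R) (lift_state p (Suc m) S \<union> {p..<p + Suc m}) + 1"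
proof -
  let ?w = "L @ replicate (Suc (Suc m)) c @ R"
  have "Suc p < length ?w" "fst (?w ! Suc p) = fst (?w ! p)" using p by (simp_all add: nth_append)
  moreover have "del_index p {p..<p + Suc (Suc m)} = {p..<p + Suc m}" by (auto split: if_splits)
  ultimately show ?thesis
    using state_loops_del_cup_cap_pair[OF w, of p] del_letter_replicate[OF p, of p "Suc m" c R]
      del_index_lift_state[of p p "Suc m" S] by simp
qed

lemma state_loops_block:
  assumes L: "valid_word n L" and R: "valid_word n R" and c: "1 \<le> fst c" "fst c < n"
    and p: "length L = p" and T: "T \<subseteq> {p..<p + m}"
  shows "state_loops n (L @ replicate m c @ R) (lift_state p m S \<union> T) =
    (if T = {} then state_loops n (L @ R) S
     else state_loops n (L @ [c] @ R) (lift_state p 1 S \<union> {p}) + card T - 1)"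
  using T
proof (induction m arbitrary: T)
  case 0
  then show ?case by simp
next
  case (Suc m)
  have w: "valid_word n (L @ replicate k c @ R)" for k using L R c by (auto simp: valid_word_def)
  show ?case
  proof (cases "\<exists>q. p \<le> q \<and> q < p + Suc m \<and> q \<notin> T")
    case True
    then obtain q where q: "p \<le> q" "q < p + Suc m" "q \<notin> T" by blast
    have "del_index q T = {} \<longleftrightarrow> T = {}" using image_del_index[OF q(3)] by auto
    then show ?thesis
      using state_loops_block_vertical[OF w p q] Suc.IH[OF del_index_subset_block[OF Suc.prems q(1,2)]]
        card_del_index[OF q(3)] by simp
  next
    case False
    then have T_full: "T = {p..<p + Suc m}" using Suc.prems by force
    show ?thesis
    proof (cases m)
      case (Suc m')
      then show ?thesis using T_full state_loops_block_cup_cap[OF w p] Suc.IH[of "{p..<p + m}"] by simp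
    qed (use T_full in simp)
  qed
qed

lemma card_less_eq_sum: "card {l. l < (N::nat) \<and> P l} = (\<Sum>l<N. if P l then 1 else 0)"
proof -
  have "card {l. l < N \<and> P l} = card {l \<in> {..<N}. P l}" by (rule arg_cong[where f = card]) auto
  also have "\<dots> = (\<Sum>l\<in>{l \<in> {..<N}. P l}. 1)" by simp
  also have "\<dots> = (\<Sum>l<N. if P l then 1 else 0)" by (rule sum.inter_filter) simp
  finally show ?thesis .
qed

lemma sum_indicator_eq_card: "finite A \<Longrightarrow> (\<Sum>x\<in>A. if P x then (1::nat) else 0) = card {x\<in>A. P x}"
  by (simp add: sum.inter_filter[symmetric])

lemma sum_lessThan_split3:
  fixes f :: "nat \<Rightarrow> 'a::comm_monoid_add"
  shows "(\<Sum>l<p+m+r. f l) = (\<Sum>l<p. f l) + (\<Sum>l\<in>{p..<p+m}. f l) + (\<Sum>l\<in>{p..<p+r}. f (l+m))"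
proof -
  have "(\<Sum>l<p+m+r. f l) = (\<Sum>l\<in>{0..<p+m+r}. f l)" by (simp add: lessThan_atLeast0)
  also have "\<dots> = (\<Sum>l\<in>{0..<p}. f l) + (\<Sum>l\<in>{p..<p+m+r}. f l)"
    by (rule sum.atLeastLessThan_concat[symmetric]) auto
  also have "(\<Sum>l\<in>{p..<p+m+r}. f l) = (\<Sum>l\<in>{p..<p+m}. f l) + (\<Sum>l\<in>{p+m..<p+m+r}. f l)"
    by (rule sum.atLeastLessThan_concat[symmetric]) auto
  also have "(\<Sum>l\<in>{p+m..<p+m+r}. f l) = (\<Sum>l\<in>{p..<p+r}. f (l+m))"
    using sum.shift_bounds_nat_ivl[of f p m "p+r"] by (simp add: add.commute add.left_commute)
  finally show ?thesis by (simp add: lessThan_atLeast0 add.assoc)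
qed

lemma sum_lessThan_split2:
  fixes f :: "nat \<Rightarrow> 'a::comm_monoid_add"
  shows "(\<Sum>l<p+r. f l) = (\<Sum>l<p. f l) + (\<Sum>l\<in>{p..<p+r}. f l)"
  using sum_lessThan_split3[of f p 0 r] by simp

lemma writhe_replicate: "writhe (L @ replicate m c @ R) = writhe (L @ R) + int m * crossing_sign c"
  by (simp add: writhe_def sum_list_replicate)

lemma card_block_indices:
  assumes "T \<subseteq> {p..<p + m}"
  shows "card {l \<in> {p..<p + m}. (l \<notin> T) = b} = (if b then m - card T else card T)"
proof (cases b)
  case True
  then have "{l \<in> {p..<p + m}. (l \<notin> T) = b} = {p..<p + m} - T" by auto
  then show ?thesis using True assms by (simp add: card_Diff_subset finite_subset)
next
  case False
  then have "{l \<in> {p..<p + m}. (l \<notin> T) = b} = T" using assms by auto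
  then show ?thesis using False by simp
qed

lemma A_count_block:
  assumes p: "length L = p" and r: "length R = r" and T: "T \<subseteq> {p..<p+m}"
  shows "A_count (L @ replicate m c @ R) (lift_state p m S \<union> T) =
    A_count (L @ R) S + (if crossing_sign c = 1 then m - card T else card T)"
proof -
  let ?w = "L @ replicate m c @ R" and ?S' = "lift_state p m S \<union> T"
  define g where "g l = (if (l \<notin> ?S') = (crossing_sign (?w ! l) = 1) then 1 else (0::nat))" for l
  define g0 where "g0 l = (if (l \<notin> S) = (crossing_sign ((L @ R) ! l) = 1) then 1 else (0::nat))" for l
  have A: "A_count ?w ?S' = (\<Sum>l<p+m+r. g l)"
    unfolding A_count_def g_def card_less_eq_sum using p r by (simp add: add.assoc)
  have A0: "A_count (L @ R) S = (\<Sum>l<p+r. g0 l)"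
    unfolding A_count_def g0_def card_less_eq_sum using p r by simp
  have s1: "(\<Sum>l<p. g l) = (\<Sum>l<p. g0 l)"
  proof (rule sum.cong)
    fix l assume l: "l \<in> {..<p}"
    have "l \<notin> T" using T l by auto
    then show "g l = g0 l" using l p by (simp add: g_def g0_def nth_append)
  qed simp
  have s3: "(\<Sum>l\<in>{p..<p+r}. g (l+m)) = (\<Sum>l\<in>{p..<p+r}. g0 l)"
  proof (rule sum.cong)
    fix l assume l: "l \<in> {p..<p+r}"
    have "l + m \<notin> T" using T l by auto
    moreover have "(L @ replicate m c @ R) ! (l + m) = (L @ R) ! l" using l p by (auto simp: nth_append)
    ultimately show "g (l+m) = g0 l" using l p by (simp add: g_def g0_def)
  qed simp
  have s2: "(\<Sum>l\<in>{p..<p+m}. g l) = (if crossing_sign c = 1 then m - card T else card T)"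
  proof -
    have "(\<Sum>l\<in>{p..<p+m}. g l) = (\<Sum>l\<in>{p..<p+m}. if (l \<notin> T) = (crossing_sign c = 1) then 1 else 0)"
      using p by (intro sum.cong) (auto simp: g_def nth_append)
    also have "\<dots> = card {l\<in>{p..<p+m}. (l \<notin> T) = (crossing_sign c = 1)}"
      by (rule sum_indicator_eq_card) simp
    finally show ?thesis using card_block_indices[OF T] by simp
  qed
  have "A_count ?w ?S' = (\<Sum>l<p. g0 l) + (if crossing_sign c = 1 then m - card T else card T) + (\<Sum>l\<in>{p..<p+r}. g0 l)"
    unfolding A sum_lessThan_split3 s1 s2 s3 ..
  moreover have "A_count (L @ R) S = (\<Sum>l<p. g0 l) + (\<Sum>l\<in>{p..<p+r}. g0 l)"
    unfolding A0 sum_lessThan_split2 ..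
  ultimately show ?thesis by simp
qed

lemma sum_Pow_power_card:
  fixes z :: "'a::comm_semiring_1"
  assumes "finite B"
  shows "(\<Sum>T\<in>Pow B. z ^ card T) = (1 + z) ^ card B"
  using prod_add[OF assms, of "\<lambda>_. z" "\<lambda>_. 1"] by (simp add: add.commute)

lemma sum_Pow_nonempty_power_card:
  fixes z :: "'a::comm_ring_1"
  assumes "finite B"
  shows "(\<Sum>T\<in>Pow B. if T = {} then a else b * z ^ card T) = a + b * ((1 + z) ^ card B - 1)"
proof -
  have "(\<Sum>T\<in>Pow B. if T = {} then a else b * z ^ card T) =
      (\<Sum>T\<in>Pow B. b * z ^ card T + (if T = {} then a - b else 0))"
    by (rule sum.cong) auto
  also have "\<dots> = b * (1 + z) ^ card B + (a - b)"
    using assms by (simp add: sum.distrib sum_distrib_left[symmetric] sum_Pow_power_card sum.delta')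
  finally show ?thesis by (simp add: algebra_simps)
qed

lemma A_count_le: "A_count w S \<le> length w"
proof -
  have "A_count w S \<le> card {..<length w}" unfolding A_count_def by (rule card_mono) auto
  then show ?thesis by simp
qed

section \<open>Laurent polynomials in s\<close>

unbundle fps_syntax

abbreviation spow :: "int \<Rightarrow> int fls" where "spow i \<equiv> fls_X_intpow i"

definition delta :: "int fls" where "delta = - (spow 1 + spow (-1))"

lemma neg_fls_X_plus_inv_eq_delta: "- (fls_X + fls_X_inv) = delta"
  by (simp add: delta_def fls_X_conv_shift_1 fls_X_inv_conv_shift_1)

definition sign_pow :: "int \<Rightarrow> int fls" where "sign_pow z = fls_const ((-1) ^ nat \<bar>z\<bar>)"

lemma neg_one_power_abs: "(-1::int) ^ nat \<bar>z\<bar> = (if even z then 1 else -1)"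
  by (simp add: even_nat_iff)

lemma sign_pow_add: "sign_pow (a + b) = sign_pow a * sign_pow b"
  by (simp add: sign_pow_def neg_one_power_abs)

lemma sign_pow_minus: "sign_pow (- a) = sign_pow a"
  by (simp add: sign_pow_def)

lemma sign_pow_diff: "sign_pow (a - b) = sign_pow a * sign_pow b"
  using sign_pow_add[of a "-b"] by (simp add: sign_pow_minus)

lemma sign_pow_sq: "sign_pow a * sign_pow a = 1"
  by (simp add: sign_pow_def neg_one_power_abs)

lemma sign_pow_eq_power: "sign_pow e = (-1) ^ nat \<bar>e\<bar>"
  by (simp add: sign_pow_def fls_const_power)

lemma spow_mult: "spow a * spow b = spow (a + b)"
  by (rule fls_X_intpow_times_fls_X_intpow)

lemma spow_times_nth: "(spow a * f) $$ k = f $$ (k - a)"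
  by (simp add: fls_X_intpow_times_conv_shift)

text \<open>Coefficients of a Laurent series vanish below its subdegree, so this says that f is a
  Laurent polynomial.\<close>

definition is_laurent_poly :: "int fls \<Rightarrow> bool" where
  "is_laurent_poly f \<longleftrightarrow> (\<exists>N. \<forall>k\<ge>N. f $$ k = 0)"

lemma laurent_add: "is_laurent_poly f \<Longrightarrow> is_laurent_poly g \<Longrightarrow> is_laurent_poly (f + g)"
proof -
  assume "is_laurent_poly f" "is_laurent_poly g"
  then obtain N M where N: "\<forall>k\<ge>N. f $$ k = 0" and M: "\<forall>k\<ge>M. g $$ k = 0" unfolding is_laurent_poly_def by blast
  then have "\<forall>k\<ge>max N M. (f + g) $$ k = 0" by simp
  then show "is_laurent_poly (f + g)" unfolding is_laurent_poly_def by blast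
qed

lemma laurent_uminus: "is_laurent_poly f \<Longrightarrow> is_laurent_poly (- f)"
  unfolding is_laurent_poly_def by auto

lemma laurent_spow_times: "is_laurent_poly f \<Longrightarrow> is_laurent_poly (spow a * f)"
  unfolding is_laurent_poly_def spow_times_nth
proof -
  assume "\<exists>N. \<forall>k\<ge>N. f $$ k = 0"
  then obtain N where N: "\<forall>k\<ge>N. f $$ k = 0" by blast
  then have "\<forall>k\<ge>N + a. f $$ (k - a) = 0" by auto
  then show "\<exists>N. \<forall>k\<ge>N. f $$ (k - a) = 0" by blast
qed

lemma laurent_const_times: "is_laurent_poly f \<Longrightarrow> is_laurent_poly (fls_const c * f)"
  unfolding is_laurent_poly_def by auto

lemma laurent_one: "is_laurent_poly 1"
  unfolding is_laurent_poly_def by (rule exI[of _ 1]) auto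

lemma delta_mult: "delta * f = - (spow 1 * f + spow (-1) * f)"
  unfolding delta_def by (simp only: mult_minus_left distrib_right)

lemma one_plus_spow_delta:
  fixes s :: int
  assumes "s = 1 \<or> s = -1"
  shows "1 + spow s * delta = - spow (2 * s)"
proof -
  have "spow s * delta = - (spow (1 + s) + spow (s - 1))"
    by (simp only: mult.commute[of "spow s"] delta_mult spow_mult) (simp add: algebra_simps)
  then show ?thesis using assms by auto
qed

lemma laurent_delta_power: "is_laurent_poly (delta ^ n)"
proof (induction n)
  case 0 then show ?case by (simp add: laurent_one)
next
  case (Suc n)
  have eq: "delta ^ Suc n = - (spow 1 * delta ^ n + spow (-1) * delta ^ n)"
    by (simp only: power_Suc delta_mult)
  show ?case unfolding eq by (intro laurent_uminus laurent_add laurent_spow_times Suc)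
qed

lemma laurent_sum:
  "finite A \<Longrightarrow> (\<And>x. x \<in> A \<Longrightarrow> is_laurent_poly (f x)) \<Longrightarrow> is_laurent_poly (\<Sum>x\<in>A. f x)"
proof (induction A rule: finite_induct)
  case empty then show ?case by (simp add: is_laurent_poly_def)
next
  case (insert x F) then show ?case by (simp add: laurent_add)
qed

lemma delta_nth: "delta $$ k = (if k = 1 \<or> k = -1 then -1 else 0)"
  by (auto simp: delta_def)

lemma fls_shift_one_times: "fls_shift k (1::int fls) * f = fls_shift k f"
  using fls_X_intpow_times_conv_shift(1)[of "-k" f] by simp

lemma delta_nth_eq_0: "k \<noteq> 1 \<Longrightarrow> k \<noteq> -1 \<Longrightarrow> delta $$ k = 0"
  by (simp add: delta_nth)

text \<open>The coefficients of a Laurent series v with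
  v (s^(3d) - (-1)^d s^d) = delta (1 - (-1)^d s^d) satisfy this recurrence. For d \<ge> 3 the two
  nonzero coefficients of delta never meet in it: the coefficients at 1 - 2dt vanish, which
  forces v_1 = -1, and then all coefficients at 1 + 2dt are \<plusminus>1.\<close>

locale delta_recurrence =
  fixes g :: "int \<Rightarrow> int" and c d :: int
  assumes c: "c = 1 \<or> c = -1" and d: "d \<ge> 3"
    and rec: "\<And>k. g (k - 3 * d) - c * g (k - d) = delta $$ k - c * delta $$ (k - d)"
begin

lemma c_square: "c * c = 1"
  using c by auto

lemma descend: "t \<ge> 1 \<Longrightarrow> g (1 - 2 * d * int t) = c * g (1 - 2 * d * int (Suc t))"
proof -
  assume "t \<ge> 1"
  then have "2 * d * int t \<ge> 2 * d" using mult_left_mono[of 1 "int t" "2 * d"] d by simp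
  then have "1 - 2 * d * int t + d \<le> -2" "1 - 2 * d * int t \<le> -2" using d by linarith+
  then have "delta $$ (1 - 2 * d * int t + d) = 0" "delta $$ (1 - 2 * d * int t) = 0"
    by (intro delta_nth_eq_0; linarith)+
  then have "g (1 - 2 * d * int (Suc t)) = c * g (1 - 2 * d * int t)"
    using rec[of "1 - 2 * d * int t + d"] by (simp add: algebra_simps)
  then show ?thesis using c_square by (metis mult.assoc mult_1)
qed

lemma zero_below:
  assumes M: "\<forall>j<M. g j = 0" and t: "t \<ge> 1"
  shows "g (1 - 2 * d * int t) = 0"
proof -
  have iter: "g (1 - 2 * d * int t) = c ^ s * g (1 - 2 * d * int (t + s))" for s
  proof (induction s)
    case (Suc s)
    then show ?case using descend[of "t + s"] t by simp
  qed simp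
  have "1 - 2 * d * int (t + nat (2 - M)) < M"
  proof -
    have "2 * d * int (t + nat (2 - M)) \<ge> int (t + nat (2 - M))" using d by (simp add: mult_le_cancel_right1)
    then show ?thesis by linarith
  qed
  then have "g (1 - 2 * d * int (t + nat (2 - M))) = 0" using M by blast
  then show ?thesis using iter[of "nat (2 - M)"] by simp
qed

lemma coeff_1: "\<forall>j<M. g j = 0 \<Longrightarrow> g 1 = -1"
proof -
  assume "\<forall>j<M. g j = 0"
  then have "g (1 - 2 * d) = 0" using zero_below[of M 1] by simp
  moreover have "delta $$ (1 + d) = 0" using d by (intro delta_nth_eq_0) simp_all
  ultimately have "- c * g 1 = c" using rec[of "1 + d"] by (simp add: delta_nth algebra_simps)
  then show ?thesis using c by auto
qed

lemma ascend: "g (1 + 2 * d * int (Suc t)) = c * g (1 + 2 * d * int t)"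
proof -
  have "2 * d * int t \<ge> 0" "2 * d * int (Suc t) = 2 * d * int t + 2 * d" using d by (simp_all add: algebra_simps)
  then have "1 + 2 * d * int t + 3 * d \<ge> 2" "1 + 2 * d * int (Suc t) \<ge> 2" using d by linarith+
  then have "delta $$ (1 + 2 * d * int t + 3 * d) = 0" "delta $$ (1 + 2 * d * int (Suc t)) = 0"
    by (auto simp: delta_nth)
  then have "g (1 + 2 * d * int t) = c * g (1 + 2 * d * int (Suc t))"
    using rec[of "1 + 2 * d * int t + 3 * d"] by (simp add: algebra_simps)
  then show ?thesis using c_square by (metis mult.assoc mult_1)
qed

lemma not_finitely_supported:
  assumes M: "\<forall>j<M. g j = 0" and N: "\<forall>j\<ge>N. g j = 0"
  shows False
proof -
  have coeffs: "g (1 + 2 * d * int t) = - (c ^ t)" for t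
  proof (induction t)
    case (Suc t)
    then show ?case using ascend[of t] by simp
  qed (simp add: coeff_1[OF M])
  have "1 + 2 * d * int (nat N) \<ge> N"
  proof -
    have "2 * d * int (nat N) \<ge> int (nat N)" using d by (simp add: mult_le_cancel_right1)
    then show ?thesis by linarith
  qed
  then have "g (1 + 2 * d * int (nat N)) = 0" using N by blast
  then have "c ^ nat N = 0" using coeffs[of "nat N"] by simp
  then show False using c by auto
qed

end

lemma no_laurent_solution_gap_ge_3:
  assumes v: "is_laurent_poly v" and d: "d \<ge> 3"
    and eq: "v * (spow (3 * d) - sign_pow d * spow d) = delta * (1 - sign_pow d * spow d)"
  shows False
proof -
  define c :: int where "c = (-1) ^ nat \<bar>d\<bar>"
  have sign: "sign_pow d = fls_const c" by (simp add: sign_pow_def c_def)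
  have "spow (3 * d) * v - fls_const c * (spow d * v) = delta - fls_const c * (spow d * delta)"
    using eq unfolding sign by (simp add: algebra_simps)
  then have "(spow (3 * d) * v - fls_const c * (spow d * v)) $$ k =
      (delta - fls_const c * (spow d * delta)) $$ k" for k
    by simp
  then have "v $$ (k - 3 * d) - c * v $$ (k - d) = delta $$ k - c * delta $$ (k - d)" for k
    by (simp add: spow_times_nth)
  moreover have "c = 1 \<or> c = -1" by (simp add: c_def neg_one_power_abs)
  ultimately interpret delta_recurrence "\<lambda>k. v $$ k" c d
    using d by unfold_locales simp_all
  obtain N where "\<forall>j\<ge>N. v $$ j = 0" using v unfolding is_laurent_poly_def by blast
  moreover have "\<forall>j<fls_subdegree v. v $$ j = 0" by simp
  ultimately show False using not_finitely_supported by blast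
qed

lemma spow_3_plus_spow_1: "spow 3 + spow 1 = delta * (- spow 2)"
  by (simp add: fls_eq_iff delta_mult fls_shift_one_times)

lemma spow_6_minus_spow_2: "spow 6 - spow 2 = delta * (- (spow 3 * (spow 2 - 1)))"
  by (simp add: fls_eq_iff delta_mult fls_shift_one_times algebra_simps)

lemma delta_nonzero: "delta \<noteq> 0"
proof
  assume "delta = 0"
  then have "delta $$ 1 = 0" by simp
  then show False by (simp add: delta_nth)
qed

lemma solution_gap_1:
  assumes "v * (spow (3 * 1) - sign_pow 1 * spow 1) = delta * (1 - sign_pow 1 * spow 1)"
  shows "- spow 2 * v = 1 + spow 1"
proof -
  have "sign_pow 1 = -1" by (simp add: sign_pow_def)
  have "delta * (- spow 2 * v) = v * (spow 3 + spow 1)" unfolding spow_3_plus_spow_1 by (simp add: ac_simps)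
  also have "\<dots> = delta * (1 + spow 1)" using assms unfolding \<open>sign_pow 1 = -1\<close> by simp
  finally show ?thesis using mult_left_cancel[OF delta_nonzero] by blast
qed

lemma solution_gap_2:
  assumes "v * (spow (3 * 2) - sign_pow 2 * spow 2) = delta * (1 - sign_pow 2 * spow 2)"
  shows "spow 3 * v = 1"
proof -
  have "sign_pow 2 = 1" by (simp add: sign_pow_def)
  have "delta * (- (spow 3 * (spow 2 - 1)) * v) = v * (spow 6 - spow 2)"
    unfolding spow_6_minus_spow_2 by (simp add: ac_simps)
  also have "\<dots> = delta * (- (spow 2 - 1))" using assms unfolding \<open>sign_pow 2 = 1\<close> by simp
  finally have "- (spow 3 * (spow 2 - 1)) * v = - (spow 2 - 1)"
    using mult_left_cancel[OF delta_nonzero] by blast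
  then have "(spow 2 - 1) * (spow 3 * v) = (spow 2 - 1) * 1" by algebra
  moreover have "spow 2 - 1 \<noteq> (0 :: int fls)"
  proof
    assume "spow 2 - 1 = (0 :: int fls)"
    then have "(spow 2 - 1 :: int fls) $$ 0 = 0" by simp
    then show False by simp
  qed
  ultimately show ?thesis using mult_left_cancel by blast
qed

text \<open>The two equations force v = -s^(-2) (1 + s) and v = s^(-3) respectively.\<close>

lemma no_common_solution_gap_1_2:
  assumes "v * (spow (3 * 1) - sign_pow 1 * spow 1) = delta * (1 - sign_pow 1 * spow 1)"
    and "v * (spow (3 * 2) - sign_pow 2 * spow 2) = delta * (1 - sign_pow 2 * spow 2)"
  shows False
proof -
  have "spow 1 * (- spow 2 * v) = - (spow 3 * v)"
    by (simp only: mult_minus_left mult_minus_right mult.assoc[symmetric] spow_mult) simp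
  then have "spow 1 * (1 + spow 1) = -1"
    unfolding solution_gap_1[OF assms(1)] solution_gap_2[OF assms(2)] .
  moreover have "spow 1 * (1 + spow 1) = spow 1 + spow 2" by (simp add: distrib_left spow_mult)
  ultimately have "(spow 1 + spow 2 :: int fls) $$ 0 = (-1 :: int fls) $$ 0" by simp
  then show False by simp
qed

section \<open>The Jones polynomial of L x_i^e R\<close>

definition bracket_exponent :: "letter list \<Rightarrow> nat set \<Rightarrow> int" where
  "bracket_exponent w S = int (A_count w S) - int (B_count w S) - 3 * writhe w"

definition state_weight :: "letter list \<Rightarrow> nat set \<Rightarrow> int fls" where
  "state_weight w S = sign_pow (writhe w) * spow (bracket_exponent w S div 2)"

lemma jones_eq_sum_state_weight:
  "jones n w = (\<Sum>S\<in>Pow {..<length w}. state_weight w S * delta ^ (state_loops n w S - 1))"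
  unfolding jones_def neg_fls_X_plus_inv_eq_delta by (simp add: state_weight_def bracket_exponent_def sign_pow_def)

lemma laurent_state_weight_sum: "is_laurent_poly (\<Sum>S\<in>Pow {..<N}. state_weight w S * delta ^ f S)"
proof (rule laurent_sum)
  fix S
  show "is_laurent_poly (state_weight w S * delta ^ f S)"
    unfolding state_weight_def sign_pow_def mult.assoc
    by (intro laurent_const_times laurent_spow_times laurent_delta_power)
qed simp

text \<open>Loops of the state of L x_i R that smooths x_i horizontally and agrees with S elsewhere;
  the sign of the crossing is irrelevant for the loops.\<close>

definition cup_cap_loops :: "nat \<Rightarrow> letter list \<Rightarrow> nat \<Rightarrow> letter list \<Rightarrow> nat set \<Rightarrow> nat" where
  "cup_cap_loops n L i R S = state_loops n (L @ [(i, True)] @ R) (lift_state (length L) 1 S \<union> {length L})"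

lemma state_loops_power_block:
  assumes L: "valid_word n L" and R: "valid_word n R" and i: "1 \<le> i" "i < n"
    and p: "length L = p" and T: "T \<subseteq> {p..<p + m}"
  shows "state_loops n (L @ replicate m (i, b) @ R) (lift_state p m S \<union> T) =
    (if T = {} then state_loops n (L @ R) S else cup_cap_loops n L i R S + card T - 1)"
proof -
  have "state_loops n (L @ [(i, b)] @ R) (lift_state p 1 S \<union> {p}) = cup_cap_loops n L i R S"
    unfolding cup_cap_loops_def p[symmetric] by (rule state_loops_cong_fst) (auto simp: nth_append nth_Cons')
  then show ?thesis using state_loops_block[OF L R _ _ p T, of "(i, b)"] i by simp
qed

lemma int_B_count: "int (B_count w S) = int (length w) - int (A_count w S)"
  using A_count_le[of w S] by (simp add: B_count_def of_nat_diff)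

lemma writhe_power_block:
  "writhe (L @ replicate (nat \<bar>e\<bar>) (i, 0 \<le> e) @ R) = writhe (L @ R) - e"
  by (simp add: writhe_replicate crossing_sign_def)

lemma bracket_exponent_power_block:
  fixes e :: int
  assumes p: "length L = p" and m: "m = nat \<bar>e\<bar>" and T: "T \<subseteq> {p..<p + m}"
  shows "bracket_exponent (L @ replicate m (i, 0 \<le> e) @ R) (lift_state p m S \<union> T) =
    bracket_exponent (L @ R) S + 2 * (e + (if 0 \<le> e then 1 else -1) * int (card T))"
proof -
  let ?w = "L @ replicate m (i, 0 \<le> e) @ R" and ?S = "lift_state p m S \<union> T"
  have "card T \<le> card {p..<p + m}" using T by (intro card_mono) simp_all
  then have card_T: "card T \<le> m" by simp
  have A: "A_count ?w ?S = A_count (L @ R) S + (if 0 \<le> e then card T else m - card T)"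
    using A_count_block[OF p refl T] by (simp add: crossing_sign_def)
  show ?thesis
  proof (cases "0 \<le> e")
    case True
    then have "int m = e" using m by simp
    then show ?thesis using A True m writhe_power_block[of L e i R]
      by (simp add: bracket_exponent_def int_B_count)
  next
    case False
    then have "int m = - e" using m by simp
    then show ?thesis using A False m card_T writhe_power_block[of L e i R]
      by (simp add: bracket_exponent_def int_B_count of_nat_diff)
  qed
qed

lemma state_weight_power_block:
  fixes e :: int
  assumes p: "length L = p" and m: "m = nat \<bar>e\<bar>" and T: "T \<subseteq> {p..<p + m}"
  shows "state_weight (L @ replicate m (i, 0 \<le> e) @ R) (lift_state p m S \<union> T) =
    state_weight (L @ R) S * (sign_pow e * spow e) * spow ((if 0 \<le> e then 1 else -1) * int (card T))"
proof -
  have "bracket_exponent (L @ replicate m (i, 0 \<le> e) @ R) (lift_state p m S \<union> T) div 2 =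
      bracket_exponent (L @ R) S div 2 + e + (if 0 \<le> e then 1 else -1) * int (card T)"
    unfolding bracket_exponent_power_block[OF p m T] by simp
  moreover have "writhe (L @ replicate m (i, 0 \<le> e) @ R) = writhe (L @ R) - e"
    using m writhe_power_block by simp
  ultimately show ?thesis
    unfolding state_weight_def by (simp only: sign_pow_diff spow_mult[symmetric] ac_simps)
qed

text \<open>Summing over the states of the block: the loop factor (1 + s^\<sigma> delta) = -s^(2\<sigma>) per
  crossing makes the sum collapse.\<close>

lemma delta_times_loop_sum:
  fixes \<sigma> :: int and B :: "nat set"
  assumes \<sigma>: "\<sigma> = 1 \<or> \<sigma> = -1" and B: "finite B" and l: "1 \<le> l0" "1 \<le> l1"
  shows "delta * (\<Sum>T\<in>Pow B. spow (\<sigma> * int (card T)) *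
      delta ^ ((if T = {} then l0 else l1 + card T - 1) - 1)) =
    delta ^ l0 + delta ^ (l1 - 1) * ((-1) ^ card B * spow (2 * \<sigma> * int (card B)) - 1)"
proof -
  define z where "z = spow \<sigma> * delta"
  have "delta * (spow (\<sigma> * int (card T)) * delta ^ ((if T = {} then l0 else l1 + card T - 1) - 1)) =
      (if T = {} then delta ^ l0 else delta ^ (l1 - 1) * z ^ card T)" if "T \<in> Pow B" for T
  proof (cases "T = {}")
    case True
    then show ?thesis using l by (simp add: power_Suc[symmetric])
  next
    case False
    moreover have "finite T" using that B finite_subset by blast
    ultimately have "card T \<ge> 1" by (simp add: Suc_le_eq card_gt_0_iff)
    then have exp: "Suc (l1 + card T - 1 - 1) = (l1 - 1) + card T" using l by simp
    have "delta * (spow (\<sigma> * int (card T)) * delta ^ (l1 + card T - 1 - 1)) =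
        spow (\<sigma> * int (card T)) * delta ^ Suc (l1 + card T - 1 - 1)"
      by (simp only: power_Suc ac_simps)
    also have "\<dots> = delta ^ (l1 - 1) * (spow \<sigma> ^ card T * delta ^ card T)"
      unfolding exp power_add fls_X_intpow_power by (simp add: ac_simps)
    also have "\<dots> = delta ^ (l1 - 1) * z ^ card T" by (simp add: z_def power_mult_distrib)
    finally show ?thesis using False by simp
  qed
  then have "delta * (\<Sum>T\<in>Pow B. spow (\<sigma> * int (card T)) * delta ^ ((if T = {} then l0 else l1 + card T - 1) - 1)) =
      (\<Sum>T\<in>Pow B. if T = {} then delta ^ l0 else delta ^ (l1 - 1) * z ^ card T)"
    unfolding sum_distrib_left by (rule sum.cong[OF refl])
  also have "\<dots> = delta ^ l0 + delta ^ (l1 - 1) * ((1 + z) ^ card B - 1)"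
    by (rule sum_Pow_nonempty_power_card[OF B])
  also have "(1 + z) ^ card B = (-1) ^ card B * spow (2 * \<sigma> * int (card B))"
  proof -
    have "1 + z = - spow (2 * \<sigma>)" unfolding z_def using \<sigma> by (rule one_plus_spow_delta)
    then have "(1 + z) ^ card B = (-1) ^ card B * spow (2 * \<sigma>) ^ card B" by (simp only: power_minus[of "spow _"])
    also have "spow (2 * \<sigma>) ^ card B = spow (int (card B) * (2 * \<sigma>))" by (rule fls_X_intpow_power)
    finally show ?thesis by (simp only: ac_simps)
  qed
  finally show ?thesis .
qed

lemma state_term_power_block:
  fixes e :: int
  assumes L: "valid_word n L" and R: "valid_word n R" and i: "1 \<le> i" "i < n"
    and p: "length L = p" and m: "m = nat \<bar>e\<bar>" and T: "T \<subseteq> {p..<p + m}"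
  defines "w \<equiv> L @ replicate m (i, 0 \<le> e) @ R"
  shows "state_weight w (lift_state p m S \<union> T) * delta ^ (state_loops n w (lift_state p m S \<union> T) - 1) =
    state_weight (L @ R) S * (sign_pow e * spow e) * (spow ((if 0 \<le> e then 1 else -1) * int (card T)) *
      delta ^ ((if T = {} then state_loops n (L @ R) S else cup_cap_loops n L i R S + card T - 1) - 1))"
  unfolding w_def state_weight_power_block[OF p m T] state_loops_power_block[OF L R i p T]
  by (simp only: mult.assoc)

lemma delta_times_power_block_sum:
  fixes e :: int
  assumes L: "valid_word n L" and R: "valid_word n R" and i: "1 \<le> i" "i < n"
    and p: "length L = p" and m: "m = nat \<bar>e\<bar>"
  defines "w \<equiv> L @ replicate m (i, 0 \<le> e) @ R"
  shows "delta * (\<Sum>T\<in>Pow {p..<p + m}. state_weight w (lift_state p m S \<union> T) *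
      delta ^ (state_loops n w (lift_state p m S \<union> T) - 1)) =
    sign_pow e * spow e * (state_weight (L @ R) S *
      (delta ^ state_loops n (L @ R) S - delta ^ (cup_cap_loops n L i R S - 1))) +
    spow (3 * e) * (state_weight (L @ R) S * delta ^ (cup_cap_loops n L i R S - 1))"
proof -
  define \<sigma> :: int where "\<sigma> = (if 0 \<le> e then 1 else -1)"
  define K where "K = state_weight (L @ R) S * (sign_pow e * spow e)"
  define l0 where "l0 = state_loops n (L @ R) S"
  define l1 where "l1 = cup_cap_loops n L i R S"
  have l: "1 \<le> l0" "1 \<le> l1"
    unfolding l0_def l1_def cup_cap_loops_def by (rule state_loops_pos, use i in simp)+
  have "(\<Sum>T\<in>Pow {p..<p + m}. state_weight w (lift_state p m S \<union> T) *
      delta ^ (state_loops n w (lift_state p m S \<union> T) - 1)) =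
    K * (\<Sum>T\<in>Pow {p..<p + m}. spow (\<sigma> * int (card T)) *
      delta ^ ((if T = {} then l0 else l1 + card T - 1) - 1))"
    unfolding sum_distrib_left w_def K_def \<sigma>_def l0_def l1_def
    by (rule sum.cong[OF refl]) (rule state_term_power_block[OF L R i p m], simp)
  then have "delta * (\<Sum>T\<in>Pow {p..<p + m}. state_weight w (lift_state p m S \<union> T) *
      delta ^ (state_loops n w (lift_state p m S \<union> T) - 1)) =
    K * (delta * (\<Sum>T\<in>Pow {p..<p + m}. spow (\<sigma> * int (card T)) *
      delta ^ ((if T = {} then l0 else l1 + card T - 1) - 1)))"
    by (simp only: mult.left_commute)
  also have "\<dots> = K * (delta ^ l0 + delta ^ (l1 - 1) * (sign_pow e * spow (2 * e) - 1))"
  proof -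
    have "\<sigma> = 1 \<or> \<sigma> = -1" by (simp add: \<sigma>_def)
    from delta_times_loop_sum[OF this _ l] have "delta * (\<Sum>T\<in>Pow {p..<p + m}. spow (\<sigma> * int (card T)) *
        delta ^ ((if T = {} then l0 else l1 + card T - 1) - 1)) =
      delta ^ l0 + delta ^ (l1 - 1) * ((-1) ^ m * spow (2 * \<sigma> * int m) - 1)"
      by simp
    moreover have "2 * \<sigma> * int m = 2 * e" "(-1) ^ m = sign_pow e"
      using m by (simp_all add: \<sigma>_def sign_pow_eq_power)
    ultimately show ?thesis by (simp only:)
  qed
  also have "\<dots> = sign_pow e * spow e * (state_weight (L @ R) S * (delta ^ l0 - delta ^ (l1 - 1))) +
      (sign_pow e * sign_pow e) * (spow e * spow (2 * e)) * (state_weight (L @ R) S * delta ^ (l1 - 1))"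
    unfolding K_def by (simp add: algebra_simps)
  also have "(sign_pow e * sign_pow e) * (spow e * spow (2 * e)) = spow (3 * e)"
    unfolding sign_pow_sq spow_mult by simp
  finally show ?thesis unfolding l0_def l1_def .
qed

lemma delta_times_jones_power_block:
  fixes e :: int
  assumes L: "valid_word n L" and R: "valid_word n R" and i: "1 \<le> i" "i < n"
  defines "P \<equiv> (\<Sum>S\<in>Pow {..<length L + length R}. state_weight (L @ R) S *
      (delta ^ state_loops n (L @ R) S - delta ^ (cup_cap_loops n L i R S - 1)))"
    and "Q \<equiv> (\<Sum>S\<in>Pow {..<length L + length R}. state_weight (L @ R) S * delta ^ (cup_cap_loops n L i R S - 1))"
  shows "delta * jones n (L @ replicate (nat \<bar>e\<bar>) (i, 0 \<le> e) @ R) = sign_pow e * spow e * P + spow (3 * e) * Q"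
proof -
  let ?p = "length L" and ?m = "nat \<bar>e\<bar>" and ?r = "length R"
  let ?w = "L @ replicate ?m (i, 0 \<le> e) @ R"
  have "length ?w = ?p + ?m + ?r" by simp
  then have "delta * jones n ?w = delta * (\<Sum>S\<in>Pow {..<?p + ?r}. \<Sum>T\<in>Pow {?p..<?p + ?m}.
      state_weight ?w (lift_state ?p ?m S \<union> T) * delta ^ (state_loops n ?w (lift_state ?p ?m S \<union> T) - 1))"
    by (simp only: jones_eq_sum_state_weight sum_Pow_split_block)
  also have "\<dots> = (\<Sum>S\<in>Pow {..<?p + ?r}. delta * (\<Sum>T\<in>Pow {?p..<?p + ?m}.
      state_weight ?w (lift_state ?p ?m S \<union> T) * delta ^ (state_loops n ?w (lift_state ?p ?m S \<union> T) - 1)))"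
    by (rule sum_distrib_left)
  also have "\<dots> = (\<Sum>S\<in>Pow {..<?p + ?r}. sign_pow e * spow e * (state_weight (L @ R) S *
      (delta ^ state_loops n (L @ R) S - delta ^ (cup_cap_loops n L i R S - 1))) +
      spow (3 * e) * (state_weight (L @ R) S * delta ^ (cup_cap_loops n L i R S - 1)))"
    by (rule sum.cong[OF refl]) (rule delta_times_power_block_sum[OF L R i refl refl])
  also have "\<dots> = sign_pow e * spow e * P + spow (3 * e) * Q"
    unfolding P_def Q_def sum.distrib sum_distrib_left ..
  finally show ?thesis .
qed

section \<open>Exponents with trivial Jones polynomial\<close>

lemma braid_word_fun_upd:
  assumes j: "1 \<le> j" "j \<le> k"
  shows "braid_word idx (a(j := e)) k =
    concat (map (\<lambda>h. replicate (nat \<bar>a h\<bar>) (idx h, a h \<ge> 0)) [1..<j]) @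
    replicate (nat \<bar>e\<bar>) (idx j, 0 \<le> e) @
    concat (map (\<lambda>h. replicate (nat \<bar>a h\<bar>) (idx h, a h \<ge> 0)) [Suc j..<Suc k])"
proof -
  have u: "[1..<Suc k] = [1..<j] @ j # [Suc j..<Suc k]"
  proof -
    have "[1..<Suc k] = [1..<j] @ [j..<Suc k]" using j by (metis le_SucI upt_add_eq_append le_add_diff_inverse)
    also have "[j..<Suc k] = j # [Suc j..<Suc k]" using j by (simp add: upt_conv_Cons)
    finally show ?thesis .
  qed
  have m1: "map (\<lambda>h. replicate (nat \<bar>(a(j := e)) h\<bar>) (idx h, (a(j := e)) h \<ge> 0)) [1..<j]
      = map (\<lambda>h. replicate (nat \<bar>a h\<bar>) (idx h, a h \<ge> 0)) [1..<j]"
    by (rule map_cong) auto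
  have m2: "map (\<lambda>h. replicate (nat \<bar>(a(j := e)) h\<bar>) (idx h, (a(j := e)) h \<ge> 0)) [Suc j..<Suc k]
      = map (\<lambda>h. replicate (nat \<bar>a h\<bar>) (idx h, a h \<ge> 0)) [Suc j..<Suc k]"
    by (rule map_cong) auto
  show ?thesis unfolding braid_word_def u map_append list.map(2) concat_append concat.simps(2) m1 m2 fun_upd_same ..
qed

lemma three_ordered_elems:
  fixes S :: "int set"
  assumes "finite S" "card S \<ge> 3"
  shows "\<exists>x y z. x \<in> S \<and> y \<in> S \<and> z \<in> S \<and> x < y \<and> y < z"
proof -
  have ne: "S \<noteq> {}" using assms by auto
  define x where "x = Min S"
  define z where "z = Max S"
  have xS: "x \<in> S" and zS: "z \<in> S" using assms ne by (auto simp: x_def z_def)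
  have "card (S - {x, z}) \<ge> 1"
  proof -
    have "card (S - {x, z}) \<ge> card S - card {x, z}" by (rule diff_card_le_card_Diff) simp
    moreover have "card {x, z} \<le> 2" by (simp add: card_insert_le_m1)
    ultimately show ?thesis using assms by linarith
  qed
  then have "S - {x, z} \<noteq> {}" by (metis card.empty not_one_le_zero)
  then obtain y where "y \<in> S - {x, z}" by blast
  then have y: "y \<in> S" "y \<noteq> x" "y \<noteq> z" by auto
  have "x \<le> y" "y \<le> z" using y assms by (auto simp: x_def z_def)
  then show ?thesis using xS zS y by (intro exI[of _ x] exI[of _ y] exI[of _ z]) auto
qed

locale power_block_form =
  fixes V :: "int \<Rightarrow> int fls" and P Q :: "int fls"
  assumes form: "\<And>e. delta * V e = sign_pow e * spow e * P + spow (3 * e) * Q"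
    and laurent_Q: "is_laurent_poly Q"
begin

lemma gap_equation:
  assumes a: "V a = 1" and b: "V b = 1"
  shows "(spow (3 * a) * Q) * (spow (3 * (b - a)) - sign_pow (b - a) * spow (b - a)) =
    delta * (1 - sign_pow (b - a) * spow (b - a))"
proof -
  define d where "d = b - a"
  define u where "u = sign_pow a * spow a * P"
  define v where "v = spow (3 * a) * Q"
  define s where "s = sign_pow d * spow d"
  define x where "x = spow (3 * d)"
  have h1: "delta = u + v" using form[of a] a by (simp add: u_def v_def)
  have h2: "delta = u * s + v * x"
  proof -
    have "delta = sign_pow b * spow b * P + spow (3 * b) * Q" using form[of b] b by simp
    also have "sign_pow b * spow b = (sign_pow a * spow a) * (sign_pow d * spow d)"
      using sign_pow_add[of a d] spow_mult[of a d] by (simp add: d_def ac_simps)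
    also have "spow (3 * b) = spow (3 * a) * spow (3 * d)"
      using spow_mult[of "3*a" "3*d"] by (simp add: d_def algebra_simps)
    finally show ?thesis by (simp add: u_def v_def s_def x_def ac_simps)
  qed
  have "v * (x - s) = delta * (1 - s)" using h1 h2 by algebra
  then show ?thesis by (simp add: v_def x_def s_def d_def)
qed

lemma values_one_gap:
  assumes "V x = 1" "V y = 1" "x < y"
  shows "y - x \<in> {1, 2}"
proof (rule ccontr)
  assume "y - x \<notin> {1, 2}"
  with assms(3) have "y - x \<ge> 3" by auto
  moreover have "is_laurent_poly (spow (3 * x) * Q)" by (rule laurent_spow_times[OF laurent_Q])
  ultimately show False using no_laurent_solution_gap_ge_3 gap_equation[OF assms(1,2)] by blast
qed

lemma no_three_consecutive_values_one:
  assumes "V x = 1" "V (x + 1) = 1" "V (x + 2) = 1"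
  shows False
proof -
  have "(spow (3 * x) * Q) * (spow (3 * 1) - sign_pow 1 * spow 1) = delta * (1 - sign_pow 1 * spow 1)"
    using gap_equation[OF assms(1,2)] by simp
  moreover have "(spow (3 * x) * Q) * (spow (3 * 2) - sign_pow 2 * spow 2) = delta * (1 - sign_pow 2 * spow 2)"
    using gap_equation[OF assms(1,3)] by simp
  ultimately show False by (rule no_common_solution_gap_1_2)
qed

lemma values_one:
  "finite {e. V e = 1} \<and> card {e. V e = 1} \<le> 2 \<and>
   (\<forall>x y. V x = 1 \<longrightarrow> V y = 1 \<longrightarrow> x \<noteq> y \<longrightarrow> \<bar>x - y\<bar> \<in> {1, 2})"
proof -
  have pairs: "\<forall>x y. V x = 1 \<longrightarrow> V y = 1 \<longrightarrow> x \<noteq> y \<longrightarrow> \<bar>x - y\<bar> \<in> {1, 2}"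
    using values_one_gap by (metis abs_minus_commute abs_of_pos diff_gt_0_iff_gt linorder_neq_iff)
  have fin: "finite {e. V e = 1}"
  proof (cases "{e. V e = 1} = {}")
    case False
    then obtain x0 where "V x0 = 1" by auto
    then have "{e. V e = 1} \<subseteq> {x0 - 2..x0 + 2}" using pairs by fastforce
    then show ?thesis by (rule finite_subset) simp
  qed simp
  have "card {e. V e = 1} \<le> 2"
  proof (rule ccontr)
    assume "\<not> card {e. V e = 1} \<le> 2"
    then obtain x y z where "V x = 1" "V y = 1" "V z = 1" "x < y" "y < z"
      using three_ordered_elems[OF fin] by auto
    moreover have "z - x \<in> {1, 2}" by (rule values_one_gap) (use calculation in auto)
    ultimately have "y = x + 1" "z = x + 2" by auto
    then show False using no_three_consecutive_values_one \<open>V x = 1\<close> \<open>V y = 1\<close> \<open>V z = 1\<close> by blast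
  qed
  with fin pairs show ?thesis by blast
qed

end

theorem lemma5p3:
  fixes n k j :: nat and idx :: "nat \<Rightarrow> nat" and a :: "nat \<Rightarrow> int"
    and V :: "int \<Rightarrow> int fls"
  assumes gens: "\<forall>h\<in>{1..k}. 1 \<le> idx h \<and> idx h < n"
    and j: "1 \<le> j" "j \<le> k"
    and V_def: "\<forall>e. V e = jones n (braid_word idx (a(j := e)) k)"
  shows "finite {e. V e = 1} \<and> card {e. V e = 1} \<le> 2 \<and>
         (\<forall>x y. V x = 1 \<longrightarrow> V y = 1 \<longrightarrow> x \<noteq> y \<longrightarrow> \<bar>x - y\<bar> \<in> {1, 2})"
proof -
  define L where "L = concat (map (\<lambda>h. replicate (nat \<bar>a h\<bar>) (idx h, a h \<ge> 0)) [1..<j])"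
  define R where "R = concat (map (\<lambda>h. replicate (nat \<bar>a h\<bar>) (idx h, a h \<ge> 0)) [Suc j..<Suc k])"
  have i: "1 \<le> idx j" "idx j < n" using gens j by auto
  have L: "valid_word n L" and R: "valid_word n R" using gens j by (auto simp: valid_word_def L_def R_def)
  have "V e = jones n (L @ replicate (nat \<bar>e\<bar>) (idx j, 0 \<le> e) @ R)" for e
    using V_def braid_word_fun_upd[OF j, of idx a e] by (simp add: L_def R_def)
  then interpret power_block_form V
    "\<Sum>S\<in>Pow {..<length L + length R}. state_weight (L @ R) S *
       (delta ^ state_loops n (L @ R) S - delta ^ (cup_cap_loops n L (idx j) R S - 1))"
    "\<Sum>S\<in>Pow {..<length L + length R}. state_weight (L @ R) S * delta ^ (cup_cap_loops n L (idx j) R S - 1)"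
    using delta_times_jones_power_block[OF L R i] by unfold_locales (simp_all add: laurent_state_weight_sum)
  show ?thesis by (rule values_one)
qed

end
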